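(* For $n\ge 2$ let $D_n(t)=\sum_{\pi\in\mathfrak{D}_n}t^{\mathrm{des}(\pi)}=\sum_{k\ge1}d_{n,k}t^k$. Then for $n\geq 3$, $$D_n(t)=(-1)^nt^{n-1}+(1+(n-1)t)D_{n-1}(t)+t(1-t)D'_{n-1}(t).$$ Equivalently, $d_{n,n-1}=1$ if $n$ is even, $d_{n,n-1}=0$ if $n$ is odd, and $d_{n,k}=(k+1)d_{n-1,k}+(n-k)d_{n-1,k-1}$ if $k\neq n-1$.
   Context: $\mathfrak{D}_n$ is the set of derangements (fixed-point-free permutations) of $[n]$, and $\mathrm{des}(\pi)=\#\{i\in[n-1]:\pi_i>\pi_{i+1}\}$. $D'_{n-1}$ denotes the derivative in $t$. *)

theory Defs
  imports "HOL-Combinatorics.Permutations" "HOL-Computational_Algebra.Polynomial"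
begin

definition derangements :: "nat \<Rightarrow> (nat \<Rightarrow> nat) set" where
  "derangements n = {p. p permutes {1..n} \<and> (\<forall>i\<in>{1..n}. p i \<noteq> i)}"

definition des :: "nat \<Rightarrow> (nat \<Rightarrow> nat) \<Rightarrow> nat" where
  "des n p = card {i \<in> {1..n-1}. p i > p (Suc i)}"

definition Dpoly :: "nat \<Rightarrow> int poly" where
  "Dpoly n = (\<Sum>p\<in>derangements n. monom 1 (des n p))"

end

theory Submission
  imports Defs "HOL-Computational_Algebra.Formal_Power_Series"
begin

text \<open>Weight each permutation \<open>\<sigma>\<close> of \<open>{1..n}\<close> by \<open>(k + n - des \<sigma>) choose n\<close>, the
  coefficient of \<open>t^k\<close> in \<open>t^des \<sigma> / (1 - t)^(n+1)\<close>. Worpitzky's identity says the total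
  weight is \<open>(k+1)^n\<close>. Inserting a new fixed point at each of the \<open>n + 1\<close> positions multiplies
  the weight of \<open>\<sigma>\<close> on average by \<open>(k + 1 + fix \<sigma>)/(n + 1)\<close>, so the total weight of the
  permutations with \<open>j\<close> fixed points is \<open>(k+j choose j) c(n-j)\<close>, where \<open>c(n)\<close> is the
  coefficient of \<open>t^k\<close> in \<open>D_n(t)/(1-t)^(n+1)\<close>. Hence \<open>C(x) (1-x)^-(k+1) = 1/(1-(k+1)x)\<close>
  for \<open>C(x) = \<Sum> c(n) x^n\<close>, i.e. \<open>c(n) = (k+1) c(n-1) + (-1)^n (k+1 choose n)\<close>. The map
  \<open>P \<mapsto> coefficients of P/(1-t)^(n+1)\<close> is injective and turns
  \<open>(1 + (n-1)t) P + t(1-t) P'\<close> into multiplication by \<open>k + 1\<close>, so this recurrence for \<open>c\<close>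
  is exactly the polynomial identity; the coefficient recurrences follow by comparing
  coefficients.\<close>

section \<open>Inserting an entry into a permutation\<close>

definition lift :: "nat \<Rightarrow> nat \<Rightarrow> nat" where
  "lift v u = (if u < v then u else Suc u)"

definition unlift :: "nat \<Rightarrow> nat \<Rightarrow> nat" where
  "unlift v u = (if u < v then u else u - 1)"

lemma unlift_lift [simp]: "unlift v (lift v u) = u"
  by (simp add: lift_def unlift_def)

lemma lift_unlift: "u \<noteq> v \<Longrightarrow> lift v (unlift v u) = u"
  by (auto simp: lift_def unlift_def)

lemma lift_neq [simp]: "lift v u \<noteq> v" "v \<noteq> lift v u"
  by (simp_all add: lift_def)

lemma lift_less_lift_iff [simp]: "lift v a < lift v b \<longleftrightarrow> a < b"
  by (auto simp: lift_def)

lemma lift_eq_lift_iff [simp]: "lift v a = lift v b \<longleftrightarrow> a = b"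
  by (auto simp: lift_def)

lemma lift_less_iff: "lift v a < v \<longleftrightarrow> a < v"
  by (auto simp: lift_def)

lemma less_lift_iff: "v < lift v a \<longleftrightarrow> v \<le> a"
  by (auto simp: lift_def)

lemma lift_in_atLeastAtMost: "u \<in> {1..m} \<Longrightarrow> lift v u \<in> {1..Suc m}"
  by (auto simp: lift_def)

lemma unlift_in_atLeastAtMost:
  "x \<in> {1..Suc m} \<Longrightarrow> p \<in> {1..Suc m} \<Longrightarrow> x \<noteq> p \<Longrightarrow> unlift p x \<in> {1..m}"
  by (auto simp: unlift_def)

text \<open>\<open>insert_perm m f p v\<close> maps \<open>p\<close> to \<open>v\<close> and is order-isomorphic to \<open>f\<close> on the other
  positions.\<close>
definition insert_perm :: "nat \<Rightarrow> (nat \<Rightarrow> nat) \<Rightarrow> nat \<Rightarrow> nat \<Rightarrow> nat \<Rightarrow> nat" where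
  "insert_perm m f p v x =
     (if x = p then v else if x \<in> {1..Suc m} then lift v (f (unlift p x)) else x)"

definition delete_perm :: "nat \<Rightarrow> (nat \<Rightarrow> nat) \<Rightarrow> nat \<Rightarrow> nat \<Rightarrow> nat" where
  "delete_perm m g p x = (if x \<in> {1..m} then unlift (g p) (g (lift p x)) else x)"

lemma insert_perm_at [simp]: "insert_perm m f p v p = v"
  by (simp add: insert_perm_def)

lemma insert_perm_other:
  "x \<in> {1..Suc m} \<Longrightarrow> x \<noteq> p \<Longrightarrow> insert_perm m f p v x = lift v (f (unlift p x))"
  by (simp add: insert_perm_def)

lemma insert_perm_permutes:
  assumes f: "f permutes {1..m}" and p: "p \<in> {1..Suc m}" and v: "v \<in> {1..Suc m}"
  shows "insert_perm m f p v permutes {1..Suc m}"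
proof (rule inj_imp_permutes)
  have f_unlift: "f (unlift p x) \<in> {1..m}" if "x \<in> {1..Suc m}" "x \<noteq> p" for x
    using unlift_in_atLeastAtMost[OF that(1) p that(2)] permutes_in_image[OF f] by simp
  show "inj_on (insert_perm m f p v) {1..Suc m}"
  proof (rule inj_onI)
    fix x y assume x: "x \<in> {1..Suc m}" and y: "y \<in> {1..Suc m}"
      and eq: "insert_perm m f p v x = insert_perm m f p v y"
    show "x = y"
    proof (cases "x = p \<or> y = p")
      case True
      have "insert_perm m f p v z \<noteq> v" if "z \<in> {1..Suc m}" "z \<noteq> p" for z
        using that by (simp add: insert_perm_other)
      then show ?thesis using True eq x y by (metis insert_perm_at)
    next
      case False
      then have "f (unlift p x) = f (unlift p y)" using eq x y by (simp add: insert_perm_other)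
      then have "unlift p x = unlift p y" using permutes_inj[OF f] by (simp add: inj_eq)
      then show ?thesis using False by (metis lift_unlift)
    qed
  qed
  show "insert_perm m f p v x \<in> {1..Suc m}" if "x \<in> {1..Suc m}" for x
    using v that lift_in_atLeastAtMost[OF f_unlift[OF that]]
    by (cases "x = p") (simp_all add: insert_perm_other)
  show "insert_perm m f p v x = x" if "x \<notin> {1..Suc m}" for x
    using that p by (auto simp: insert_perm_def)
qed simp

lemma delete_perm_permutes:
  assumes g: "g permutes {1..Suc m}" and p: "p \<in> {1..Suc m}"
  shows "delete_perm m g p permutes {1..m}"
proof (rule inj_imp_permutes)
  have g_lift: "g (lift p x) \<in> {1..Suc m}" "g (lift p x) \<noteq> g p" if "x \<in> {1..m}" for x
    using lift_in_atLeastAtMost[OF that] permutes_in_image[OF g] permutes_inj[OF g]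
    by (auto simp: inj_eq)
  show "inj_on (delete_perm m g p) {1..m}"
  proof (rule inj_onI)
    fix x y assume x: "x \<in> {1..m}" and y: "y \<in> {1..m}"
      and "delete_perm m g p x = delete_perm m g p y"
    then have "unlift (g p) (g (lift p x)) = unlift (g p) (g (lift p y))"
      by (simp add: delete_perm_def)
    then have "g (lift p x) = g (lift p y)" using g_lift x y by (metis lift_unlift)
    then show "x = y" using permutes_inj[OF g] by (simp add: inj_eq)
  qed
  show "delete_perm m g p x \<in> {1..m}" if "x \<in> {1..m}" for x
    using unlift_in_atLeastAtMost[OF g_lift(1)[OF that] _ g_lift(2)[OF that]]
      permutes_in_image[OF g] p that
    by (simp add: delete_perm_def)
  show "delete_perm m g p x = x" if "x \<notin> {1..m}" for x
    using that by (auto simp: delete_perm_def)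
qed simp

lemma insert_perm_delete_perm:
  assumes g: "g permutes {1..Suc m}" and p: "p \<in> {1..Suc m}"
  shows "insert_perm m (delete_perm m g p) p (g p) = g"
proof
  fix x
  show "insert_perm m (delete_perm m g p) p (g p) x = g x"
  proof (cases "x = p \<or> x \<notin> {1..Suc m}")
    case True
    then show ?thesis using permutes_not_in[OF g, of x] by (auto simp: insert_perm_def)
  next
    case False
    then have "unlift p x \<in> {1..m}" "g x \<noteq> g p"
      using unlift_in_atLeastAtMost[of x m p] p permutes_inj[OF g] by (auto simp: inj_eq)
    then show ?thesis using False by (simp add: insert_perm_other delete_perm_def lift_unlift)
  qed
qed

lemma delete_perm_insert_perm:
  assumes f: "f permutes {1..m}"
  shows "delete_perm m (insert_perm m f p v) p = f"
proof
  fix x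
  show "delete_perm m (insert_perm m f p v) p x = f x"
  proof (cases "x \<in> {1..m}")
    case True
    then show ?thesis using lift_in_atLeastAtMost[OF True, of p]
      by (simp add: delete_perm_def insert_perm_other)
  next
    case False
    then show ?thesis using permutes_not_in[OF f, of x] by (auto simp: delete_perm_def)
  qed
qed

lemma bij_betw_insert_perm:
  assumes "p \<in> {1..Suc m}" "v \<in> {1..Suc m}"
  shows "bij_betw (\<lambda>f. insert_perm m f p v)
           {f. f permutes {1..m}} {g. g permutes {1..Suc m} \<and> g p = v}"
proof (rule bij_betw_byWitness[where f' = "\<lambda>g. delete_perm m g p"])
  show "(\<lambda>f. insert_perm m f p v) ` {f. f permutes {1..m}} \<subseteq> {g. g permutes {1..Suc m} \<and> g p = v}"
    using insert_perm_permutes[OF _ assms] by auto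
  show "(\<lambda>g. delete_perm m g p) ` {g. g permutes {1..Suc m} \<and> g p = v} \<subseteq> {f. f permutes {1..m}}"
    using delete_perm_permutes[OF _ assms(1)] by auto
qed (use assms in \<open>auto simp: delete_perm_insert_perm insert_perm_delete_perm\<close>)

lemma sum_permutes_Suc_by_insert_perm:
  assumes v: "\<And>p. p \<in> {1..Suc m} \<Longrightarrow> v p \<in> {1..Suc m}"
  shows "(\<Sum>\<sigma> | \<sigma> permutes {1..Suc m}. \<Sum>p\<in>{1..Suc m}. if \<sigma> p = v p then g \<sigma> else 0)
       = (\<Sum>p\<in>{1..Suc m}. \<Sum>f | f permutes {1..m}. g (insert_perm m f p (v p)))"
proof -
  have "(\<Sum>\<sigma> | \<sigma> permutes {1..Suc m}. if \<sigma> p = v p then g \<sigma> else 0)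
      = (\<Sum>f | f permutes {1..m}. g (insert_perm m f p (v p)))" if p: "p \<in> {1..Suc m}" for p
  proof -
    have "(\<Sum>\<sigma> | \<sigma> permutes {1..Suc m}. if \<sigma> p = v p then g \<sigma> else 0)
        = (\<Sum>\<sigma> | \<sigma> permutes {1..Suc m} \<and> \<sigma> p = v p. g \<sigma>)"
      by (simp add: sum.inter_filter[symmetric] finite_permutations conj_commute)
    also have "\<dots> = (\<Sum>f | f permutes {1..m}. g (insert_perm m f p (v p)))"
      using p v[OF p] by (intro sum.reindex_bij_betw[symmetric] bij_betw_insert_perm)
    finally show ?thesis .
  qed
  then show ?thesis by (subst sum.swap) (rule sum.cong, simp_all)
qed

section \<open>Fixed points and descents under insertion\<close>

definition nfix :: "nat \<Rightarrow> (nat \<Rightarrow> nat) \<Rightarrow> nat" where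
  "nfix n g = card {i \<in> {1..n}. g i = i}"

lemma nfix_le: "nfix n g \<le> n"
proof -
  have "nfix n g \<le> card {1..n}" unfolding nfix_def by (rule card_mono) auto
  then show ?thesis by simp
qed

lemma nfix_eq_sum: "nfix n g = (\<Sum>i\<in>{1..n}. if g i = i then 1 else 0)"
  unfolding nfix_def card_eq_sum by (rule sum.inter_filter) simp

lemma nfix_mult_eq_sum: "nfix n g * c = (\<Sum>i\<in>{1..n}. if g i = i then c else 0)"
  unfolding nfix_eq_sum sum_distrib_right by (rule sum.cong) simp_all

lemma derangements_eq_nfix: "derangements n = {\<sigma>. \<sigma> permutes {1..n} \<and> nfix n \<sigma> = 0}"
  unfolding derangements_def nfix_def by auto

lemma nfix_insert_perm_fixpoint:
  assumes p: "p \<in> {1..Suc m}"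
  shows "nfix (Suc m) (insert_perm m f p p) = Suc (nfix m f)"
proof -
  have "{i \<in> {1..Suc m}. insert_perm m f p p i = i} = insert p (lift p ` {i \<in> {1..m}. f i = i})"
  proof (intro set_eqI iffI)
    fix i assume i: "i \<in> {i \<in> {1..Suc m}. insert_perm m f p p i = i}"
    show "i \<in> insert p (lift p ` {i \<in> {1..m}. f i = i})"
    proof (cases "i = p")
      case False
      then have "lift p (f (unlift p i)) = i" "unlift p i \<in> {1..m}"
        using i p unlift_in_atLeastAtMost[of i m p] by (auto simp: insert_perm_other)
      then have "f (unlift p i) = unlift p i" "unlift p i \<in> {1..m}"
        by (metis unlift_lift)+
      then show ?thesis using False by (metis (mono_tags) image_eqI insertCI lift_unlift mem_Collect_eq)
    qed simp
  next
    fix i assume "i \<in> insert p (lift p ` {i \<in> {1..m}. f i = i})"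
    then show "i \<in> {i \<in> {1..Suc m}. insert_perm m f p p i = i}"
      using p lift_in_atLeastAtMost by (auto simp: insert_perm_other)
  qed
  moreover have "card (lift p ` {i \<in> {1..m}. f i = i}) = nfix m f"
    unfolding nfix_def by (rule card_image) (auto simp: inj_on_def)
  ultimately show ?thesis by (simp add: nfix_def card_insert_disjoint image_iff)
qed

definition descent_at :: "(nat \<Rightarrow> nat) \<Rightarrow> nat \<Rightarrow> nat" where
  "descent_at g i = (if g (Suc i) < g i then 1 else 0)"

lemma des_eq_sum_descent_at: "des n g = (\<Sum>i\<in>{1..<n}. descent_at g i)"
proof -
  have "{1..n - 1} = {1..<n}" by auto
  moreover have "card {i \<in> {1..<n}. g (Suc i) < g i} = (\<Sum>i\<in>{1..<n}. descent_at g i)"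
    unfolding card_eq_sum descent_at_def by (rule sum.inter_filter) simp
  ultimately show ?thesis by (simp add: des_def)
qed

lemma des_le: "des n g \<le> n - 1"
proof -
  have "des n g \<le> card {1..n - 1}" unfolding des_def by (rule card_mono) auto
  then show ?thesis by simp
qed

lemma sum_atLeastLessThan_split_at:
  fixes h :: "nat \<Rightarrow> 'a::comm_monoid_add"
  assumes "q \<le> n"
  shows "(\<Sum>i\<in>{1..<n}. h i)
       = (\<Sum>i\<in>{1..<q}. h i) + (if 1 \<le> q \<and> q < n then h q else 0) + (\<Sum>i\<in>{Suc q..<n}. h i)"
proof (cases "1 \<le> q \<and> q < n")
  case True
  have "(\<Sum>i\<in>{1..<n}. h i) = (\<Sum>i\<in>{1..<q}. h i) + (\<Sum>i\<in>{q..<n}. h i)"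
    using True by (simp add: sum.atLeastLessThan_concat)
  also have "(\<Sum>i\<in>{q..<n}. h i) = h q + (\<Sum>i\<in>{Suc q..<n}. h i)"
    using True by (intro sum.atLeast_Suc_lessThan) simp
  finally show ?thesis using True by (simp add: add.assoc)
next
  case False
  then consider "q = 0" | "q = n" using assms by linarith
  then show ?thesis by cases auto
qed

lemma insert_perm_Suc:
  assumes "j \<in> {1..Suc m}"
  shows "insert_perm m f (Suc q) v j =
           (if j \<le> q then lift v (f j) else if j = Suc q then v else lift v (f (j - 1)))"
  using assms by (auto simp: insert_perm_def unlift_def)

text \<open>Inserting the value \<open>v\<close> between positions \<open>q\<close> and \<open>q + 1\<close> of \<open>f\<close>
  destroys the descent of \<open>f\<close> at \<open>q\<close> (if any) and creates the descents of the two new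
  adjacent pairs; all other descents are shifted along.\<close>
lemma des_insert_perm:
  assumes q: "q \<le> m"
  shows "des (Suc m) (insert_perm m f (Suc q) v) + (if 1 \<le> q \<and> q < m then descent_at f q else 0)
       = des m f + (if 1 \<le> q \<and> v \<le> f q then 1 else 0) + (if q < m \<and> f (Suc q) < v then 1 else 0)"
proof -
  let ?g = "insert_perm m f (Suc q) v"
  have low: "(\<Sum>i\<in>{1..<q}. descent_at ?g i) = (\<Sum>i\<in>{1..<q}. descent_at f i)"
    by (rule sum.cong) (use q in \<open>auto simp: descent_at_def insert_perm_Suc\<close>)
  have at_q: "(if 1 \<le> q \<and> q < Suc m then descent_at ?g q else 0)
      = (if 1 \<le> q \<and> v \<le> f q then 1 else 0)"
    using q by (auto simp: descent_at_def insert_perm_Suc less_lift_iff)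
  have high: "(\<Sum>i\<in>{Suc q..<Suc m}. descent_at ?g i)
      = (if q < m \<and> f (Suc q) < v then 1 else 0) + (\<Sum>i\<in>{Suc q..<m}. descent_at f i)"
  proof (cases "q < m")
    case True
    have "(\<Sum>i\<in>{Suc q..<Suc m}. descent_at ?g i)
        = descent_at ?g (Suc q) + (\<Sum>i\<in>{Suc (Suc q)..<Suc m}. descent_at ?g i)"
      using True by (intro sum.atLeast_Suc_lessThan) simp
    also have "(\<Sum>i\<in>{Suc (Suc q)..<Suc m}. descent_at ?g i)
        = (\<Sum>i\<in>{Suc q..<m}. descent_at ?g (Suc i))"
      by (rule sum.shift_bounds_Suc_ivl)
    also have "descent_at ?g (Suc q) = (if f (Suc q) < v then 1 else 0)"
      using True by (auto simp: descent_at_def insert_perm_Suc lift_less_iff)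
    also have "(\<Sum>i\<in>{Suc q..<m}. descent_at ?g (Suc i)) = (\<Sum>i\<in>{Suc q..<m}. descent_at f i)"
      by (rule sum.cong) (auto simp: descent_at_def insert_perm_Suc)
    finally show ?thesis using True by simp
  qed (use q in simp)
  have "des (Suc m) ?g = (\<Sum>i\<in>{1..<q}. descent_at f i) + (if 1 \<le> q \<and> v \<le> f q then 1 else 0)
      + ((if q < m \<and> f (Suc q) < v then 1 else 0) + (\<Sum>i\<in>{Suc q..<m}. descent_at f i))"
    unfolding des_eq_sum_descent_at sum_atLeastLessThan_split_at[OF le_SucI[OF q]] low at_q high ..
  moreover have "des m f = (\<Sum>i\<in>{1..<q}. descent_at f i)
      + (if 1 \<le> q \<and> q < m then descent_at f q else 0) + (\<Sum>i\<in>{Suc q..<m}. descent_at f i)"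
    unfolding des_eq_sum_descent_at by (rule sum_atLeastLessThan_split_at[OF q])
  ultimately show ?thesis by linarith
qed

lemma des_insert_perm_bounds:
  assumes "p \<in> {1..Suc m}"
  shows "des m f \<le> des (Suc m) (insert_perm m f p v) \<and> des (Suc m) (insert_perm m f p v) \<le> Suc (des m f)"
proof -
  obtain q where "p = Suc q" "q \<le> m" using assms by (cases p) auto
  then show ?thesis using des_insert_perm[of q m f v] by (auto simp: descent_at_def split: if_splits)
qed

lemma sum_des_insert_perm:
  "(\<Sum>p\<in>{1..Suc m}. des (Suc m) (insert_perm m f p (v p))) + des m f
     = Suc m * des m f + (\<Sum>q\<in>{0..m}. (if 1 \<le> q \<and> v (Suc q) \<le> f q then 1 else 0)
                                       + (if q < m \<and> f (Suc q) < v (Suc q) then 1 else 0))"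
proof -
  let ?X = "\<lambda>q. if 1 \<le> q \<and> q < m then descent_at f q else 0"
  have "sum ?X {0..m} = sum (descent_at f) {q \<in> {0..m}. 1 \<le> q \<and> q < m}"
    by (rule sum.inter_filter[symmetric]) simp
  also have "{q \<in> {0..m}. 1 \<le> q \<and> q < m} = {1..<m}" by auto
  finally have X: "sum ?X {0..m} = des m f" by (simp add: des_eq_sum_descent_at)
  have "(\<Sum>p\<in>{1..Suc m}. des (Suc m) (insert_perm m f p (v p))) + des m f
      = (\<Sum>q\<in>{0..m}. des (Suc m) (insert_perm m f (Suc q) (v (Suc q))) + ?X q)"
    using sum.atLeast_Suc_atMost_Suc_shift[of _ 0 m] X by (simp add: o_def sum.distrib)
  also have "\<dots> = (\<Sum>q\<in>{0..m}. des m f + (if 1 \<le> q \<and> v (Suc q) \<le> f q then 1 else 0)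
                                       + (if q < m \<and> f (Suc q) < v (Suc q) then 1 else 0))"
    by (rule sum.cong[OF refl], rule des_insert_perm) simp
  finally show ?thesis by (simp add: sum.distrib add.assoc)
qed

text \<open>Each position \<open>i\<close> of \<open>f\<close> is an excedance, a deficiency or a fixed point.\<close>
lemma sum_des_insert_perm_fixpoint:
  "(\<Sum>p\<in>{1..Suc m}. des (Suc m) (insert_perm m f p p)) + des m f + nfix m f = Suc m * des m f + m"
proof -
  have exc: "(\<Sum>q\<in>{0..m}. if 1 \<le> q \<and> Suc q \<le> f q then 1 else 0)
      = (\<Sum>i\<in>{1..m}. if i < f i then 1 else (0::nat))"
    by (rule sum.mono_neutral_cong_right) auto
  have "(\<Sum>q\<in>{0..m}. if q < m \<and> f (Suc q) < Suc q then 1 else 0)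
      = (\<Sum>q\<in>{0..<m}. if f (Suc q) < Suc q then 1 else (0::nat))"
    by (rule sum.mono_neutral_cong_right) auto
  also have "\<dots> = (\<Sum>i\<in>{1..m}. if f i < i then 1 else 0)"
    using sum.shift_bounds_Suc_ivl[of "\<lambda>i. if f i < i then 1 else (0::nat)" 0 m]
    by (simp add: atLeastLessThanSuc_atLeastAtMost)
  finally have dfc: "(\<Sum>q\<in>{0..m}. if q < m \<and> f (Suc q) < Suc q then 1 else 0)
      = (\<Sum>i\<in>{1..m}. if f i < i then 1 else (0::nat))" .
  have "(\<Sum>i\<in>{1..m}. (if i < f i then 1 else 0) + (if f i < i then 1 else 0)
                      + (if f i = i then 1 else (0::nat))) = m"
    by (subst sum.cong[OF refl, of _ _ "\<lambda>_. 1"]) auto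
  then show ?thesis
    using sum_des_insert_perm[of m f "\<lambda>p. p"] exc dfc
    by (simp add: nfix_eq_sum sum.distrib)
qed

lemma sum_des_insert_perm_max:
  assumes f: "f permutes {1..m}"
  shows "(\<Sum>p\<in>{1..Suc m}. des (Suc m) (insert_perm m f p (Suc m))) + des m f = Suc m * des m f + m"
proof -
  have "f q < Suc m" if "1 \<le> q" "q \<le> m" for q
    using permutes_in_image[OF f, of q] that by simp
  then have "(\<Sum>q\<in>{0..m}. (if 1 \<le> q \<and> Suc m \<le> f q then 1 else 0)
                          + (if q < m \<and> f (Suc q) < Suc m then 1 else 0))
      = (\<Sum>q\<in>{0..<m}. 1::nat)"
    by (intro sum.mono_neutral_cong_right) (force simp: not_le)+
  then show ?thesis using sum_des_insert_perm[of m f "\<lambda>_. Suc m"] by simp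
qed

lemma sum_choose_Suc_near_constant:
  fixes e :: "'a \<Rightarrow> nat"
  assumes P: "finite P" "card P = Suc m" and d: "d \<le> m"
    and e: "\<And>p. p \<in> P \<Longrightarrow> d \<le> e p \<and> e p \<le> Suc d"
    and sum_e: "(\<Sum>p\<in>P. e p) + d + c = Suc m * d + m"
  shows "(\<Sum>p\<in>P. (k + Suc m - e p) choose Suc m) = (k + 1 + c) * ((k + m - d) choose m)"
proof -
  let ?C = "(k + m - d) choose m"
  have Suc_diff: "k + Suc m - d = Suc (k + m - d)" using d by simp
  have pascal: "((k + Suc m - e p) choose Suc m) + (e p - d) * ?C = (k + Suc m - d) choose Suc m"
    if "p \<in> P" for p
  proof (cases "e p = d")
    case False
    then have "e p = Suc d" using e[OF that] by simp
    moreover have "k + Suc m - Suc d = k + m - d" by simp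
    ultimately show ?thesis unfolding Suc_diff by simp
  qed (simp add: Suc_diff)
  have "(\<Sum>p\<in>P. (k + Suc m - e p) choose Suc m) + (\<Sum>p\<in>P. e p - d) * ?C
      = (\<Sum>p\<in>P. ((k + Suc m - e p) choose Suc m) + (e p - d) * ?C)"
    by (simp add: sum.distrib sum_distrib_right)
  also have "\<dots> = (\<Sum>p\<in>P. (k + Suc m - d) choose Suc m)"
    by (rule sum.cong[OF refl pascal])
  also have "\<dots> = Suc m * (Suc (k + m - d) choose Suc m)"
    using P by (simp only: sum_constant Suc_diff of_nat_id)
  also have "\<dots> = Suc (k + m - d) * ?C" by (rule Suc_times_binomial)
  finally have sum_C: "(\<Sum>p\<in>P. (k + Suc m - e p) choose Suc m) + (\<Sum>p\<in>P. e p - d) * ?C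
      = Suc (k + m - d) * ?C" .
  have "(\<Sum>p\<in>P. e p - d) + Suc m * d = (\<Sum>p\<in>P. (e p - d) + d)"
    using P by (simp add: sum.distrib)
  also have "\<dots> = (\<Sum>p\<in>P. e p)" by (rule sum.cong) (use e in auto)
  finally have "Suc (k + m - d) = (k + 1 + c) + (\<Sum>p\<in>P. e p - d)"
    using sum_e d by simp
  then show ?thesis using sum_C by (simp add: distrib_right)
qed

section \<open>Worpitzky's identity refined by fixed points\<close>

definition worpitzky_weight :: "nat \<Rightarrow> nat \<Rightarrow> (nat \<Rightarrow> nat) \<Rightarrow> nat" where
  "worpitzky_weight n k g = (k + n - des n g) choose n"

lemma sum_worpitzky_weight_insert_perm_fixpoint:
  "(\<Sum>p\<in>{1..Suc m}. worpitzky_weight (Suc m) k (insert_perm m f p p))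
     = (k + 1 + nfix m f) * worpitzky_weight m k f"
  unfolding worpitzky_weight_def
  by (rule sum_choose_Suc_near_constant)
     (use des_le[of m f] des_insert_perm_bounds sum_des_insert_perm_fixpoint[of m f] in auto)

lemma sum_worpitzky_weight_insert_perm_max:
  assumes "f permutes {1..m}"
  shows "(\<Sum>p\<in>{1..Suc m}. worpitzky_weight (Suc m) k (insert_perm m f p (Suc m)))
           = (k + 1) * worpitzky_weight m k f"
proof -
  have "(\<Sum>p\<in>{1..Suc m}. worpitzky_weight (Suc m) k (insert_perm m f p (Suc m)))
           = (k + 1 + 0) * worpitzky_weight m k f"
    unfolding worpitzky_weight_def
    by (rule sum_choose_Suc_near_constant)
       (use des_le[of m f] des_insert_perm_bounds sum_des_insert_perm_max[OF assms] in auto)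
  then show ?thesis by simp
qed

theorem worpitzky_identity: "(\<Sum>\<sigma> | \<sigma> permutes {1..n}. worpitzky_weight n k \<sigma>) = (k + 1) ^ n"
proof (induction n)
  case 0
  have "{\<sigma>. \<sigma> permutes {1..0::nat}} = {id}" by (auto simp: permutes_empty)
  then show ?case by (simp add: worpitzky_weight_def)
next
  case (Suc m)
  have unique_preimage: "(\<Sum>p\<in>{1..Suc m}. if \<sigma> p = Suc m then g \<sigma> else 0) = g \<sigma>"
    if \<sigma>: "\<sigma> permutes {1..Suc m}" for \<sigma> and g :: "(nat \<Rightarrow> nat) \<Rightarrow> nat"
  proof -
    have "inv \<sigma> (Suc m) \<in> {1..Suc m}" using permutes_in_image[OF permutes_inv[OF \<sigma>]] by simp
    moreover have "\<sigma> p = Suc m \<longleftrightarrow> p = inv \<sigma> (Suc m)" for p using permutes_inv_eq[OF \<sigma>] by metis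
    ultimately show ?thesis by (simp add: sum.delta')
  qed
  have "(\<Sum>\<sigma> | \<sigma> permutes {1..Suc m}. worpitzky_weight (Suc m) k \<sigma>)
      = (\<Sum>\<sigma> | \<sigma> permutes {1..Suc m}. \<Sum>p\<in>{1..Suc m}.
           if \<sigma> p = Suc m then worpitzky_weight (Suc m) k \<sigma> else 0)"
    by (rule sum.cong[OF refl], rule unique_preimage[symmetric]) simp
  also have "\<dots> = (\<Sum>f | f permutes {1..m}. \<Sum>p\<in>{1..Suc m}.
                     worpitzky_weight (Suc m) k (insert_perm m f p (Suc m)))"
    by (subst sum_permutes_Suc_by_insert_perm) (simp, rule sum.swap)
  also have "\<dots> = (k + 1) * (\<Sum>f | f permutes {1..m}. worpitzky_weight m k f)"
    unfolding sum_distrib_left by (rule sum.cong[OF refl], rule sum_worpitzky_weight_insert_perm_max) simp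
  finally show ?case using Suc.IH by simp
qed

definition fix_weight :: "nat \<Rightarrow> nat \<Rightarrow> nat \<Rightarrow> nat" where
  "fix_weight k n j = (\<Sum>\<sigma> | \<sigma> permutes {1..n} \<and> nfix n \<sigma> = j. worpitzky_weight n k \<sigma>)"

lemma fix_weight_eq_sum_if:
  "fix_weight k n j = (\<Sum>\<sigma> | \<sigma> permutes {1..n}. if nfix n \<sigma> = j then worpitzky_weight n k \<sigma> else 0)"
  unfolding fix_weight_def
  by (simp add: sum.inter_filter[symmetric] finite_permutations conj_commute)

lemma sum_fix_weight: "(\<Sum>j\<in>{0..n}. fix_weight k n j) = (k + 1) ^ n"
  unfolding fix_weight_eq_sum_if
  using worpitzky_identity[of n k] by (subst sum.swap) (simp add: sum.delta' nfix_le)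

text \<open>Double counting of pairs (permutation, fixed point): deleting the fixed point \<open>p\<close> is
  inverted by \<open>insert_perm\<close> with \<open>v = p\<close>.\<close>
lemma fix_weight_Suc: "Suc j * fix_weight k (Suc m) (Suc j) = (k + 1 + j) * fix_weight k m j"
proof -
  have "Suc j * fix_weight k (Suc m) (Suc j)
      = (\<Sum>\<sigma> | \<sigma> permutes {1..Suc m}. \<Sum>p\<in>{1..Suc m}.
           if \<sigma> p = p then (if nfix (Suc m) \<sigma> = Suc j then worpitzky_weight (Suc m) k \<sigma> else 0) else 0)"
    unfolding fix_weight_eq_sum_if sum_distrib_left
    by (rule sum.cong[OF refl], subst nfix_mult_eq_sum[symmetric]) simp
  also have "\<dots> = (\<Sum>p\<in>{1..Suc m}. \<Sum>f | f permutes {1..m}.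
      if nfix m f = j then worpitzky_weight (Suc m) k (insert_perm m f p p) else 0)"
    by (subst sum_permutes_Suc_by_insert_perm) (auto intro!: sum.cong simp: nfix_insert_perm_fixpoint)
  also have "\<dots> = (\<Sum>f | f permutes {1..m}.
                     if nfix m f = j then (k + 1 + j) * worpitzky_weight m k f else 0)"
  proof (subst sum.swap, rule sum.cong[OF refl])
    fix f
    show "(\<Sum>p\<in>{1..Suc m}. if nfix m f = j then worpitzky_weight (Suc m) k (insert_perm m f p p) else 0)
        = (if nfix m f = j then (k + 1 + j) * worpitzky_weight m k f else 0)"
      using sum_worpitzky_weight_insert_perm_fixpoint[of m k f] by (cases "nfix m f = j") simp_all
  qed
  also have "\<dots> = (k + 1 + j) * fix_weight k m j"
    unfolding fix_weight_eq_sum_if sum_distrib_left by (rule sum.cong) simp_all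
  finally show ?thesis .
qed

lemma fix_weight_eq_choose_mult:
  "j \<le> n \<Longrightarrow> fix_weight k n j = ((k + j) choose j) * fix_weight k (n - j) 0"
proof (induction j arbitrary: n)
  case (Suc j)
  then obtain m where n: "n = Suc m" and j: "j \<le> m" by (cases n) auto
  have "Suc j * fix_weight k n (Suc j) = (k + 1 + j) * fix_weight k m j"
    using fix_weight_Suc n by simp
  also have "\<dots> = ((k + 1 + j) * ((k + j) choose j)) * fix_weight k (m - j) 0"
    by (simp only: Suc.IH[OF j] mult.assoc)
  also have "(k + 1 + j) * ((k + j) choose j) = Suc j * ((k + Suc j) choose Suc j)"
    using Suc_times_binomial[of j "k + j"] by simp
  also have "\<dots> * fix_weight k (m - j) 0 = Suc j * (((k + Suc j) choose Suc j) * fix_weight k (n - Suc j) 0)"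
    using n by (simp add: algebra_simps del: binomial_Suc_Suc)
  finally show ?case by (simp only: mult_left_cancel)
qed simp

lemma sum_choose_mult_fix_weight_zero:
  "(\<Sum>j\<in>{0..n}. ((k + j) choose j) * fix_weight k (n - j) 0) = (k + 1) ^ n"
proof -
  have "(\<Sum>j\<in>{0..n}. ((k + j) choose j) * fix_weight k (n - j) 0) = (\<Sum>j\<in>{0..n}. fix_weight k n j)"
    by (rule sum.cong[OF refl], rule fix_weight_eq_choose_mult[symmetric]) simp
  then show ?thesis by (simp add: sum_fix_weight)
qed

section \<open>Inverting the convolution with \<open>(1-x)^-(k+1)\<close>\<close>

lemma convolution_cancel_left:
  fixes B x y :: "nat \<Rightarrow> 'a::comm_ring_1"
  assumes B0: "B 0 = 1"
    and eq: "\<And>i. (\<Sum>j\<in>{0..i}. B j * x (i - j)) = (\<Sum>j\<in>{0..i}. B j * y (i - j))"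
  shows "x n = y n"
proof (induction n rule: less_induct)
  case (less n)
  have split: "(\<Sum>j\<in>{0..n}. B j * z (n - j)) = z n + (\<Sum>j\<in>{1..n}. B j * z (n - j))" for z
    using B0 by (simp add: sum.atLeast_Suc_atMost)
  have "(\<Sum>j\<in>{1..n}. B j * x (n - j)) = (\<Sum>j\<in>{1..n}. B j * y (n - j))"
    by (rule sum.cong) (simp_all add: less.IH)
  then show ?case using eq[of n] split[of x] split[of y] by simp
qed

lemma convolution_first_difference:
  fixes B c :: "nat \<Rightarrow> 'a::comm_ring_1"
  assumes conv: "\<And>i. (\<Sum>j\<in>{0..i}. B j * c (i - j)) = a ^ i"
  shows "(\<Sum>j\<in>{0..i}. B j * (c (i - j) - (if i - j = 0 then 0 else a * c (i - j - 1))))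
           = (if i = 0 then 1 else 0)"
proof (cases i)
  case (Suc i')
  have "(\<Sum>j\<in>{0..Suc i'}. B j * (if Suc i' - j = 0 then 0 else a * c (Suc i' - j - 1)))
      = (\<Sum>j\<in>{0..i'}. a * (B j * c (i' - j)))"
    by (auto intro!: sum.cong simp: Suc_diff_le mult.left_commute)
  also have "\<dots> = a ^ i" using conv[of i'] Suc by (simp add: sum_distrib_left[symmetric])
  finally show ?thesis unfolding Suc
    using conv[of i] Suc by (simp add: right_diff_distrib sum_subtractf)
qed (use conv[of 0] in simp)

text \<open>The power series \<open>\<Sum> (k+j choose j) t^j = (1-t)^-(k+1)\<close> and \<open>(1-t)^(k+1)\<close> are
  mutually inverse; via \<open>gchoose\<close> this is the Vandermonde convolution of the exponents
  \<open>-(k+1)\<close> and \<open>k+1\<close>.\<close>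
lemma convolution_choose_alternating_choose:
  "(\<Sum>j\<in>{0..n}. of_nat ((k + j) choose j) * (-1) ^ (n - j) * of_nat ((k + 1) choose (n - j)) :: 'a::field_char_0)
     = (if n = 0 then 1 else 0)"
proof -
  let ?a = "- (of_nat k + 1) :: 'a"
  let ?b = "of_nat k + 1 :: 'a"
  have neg: "of_nat ((k + j) choose j) = (-1) ^ j * (?a gchoose j)" for j
  proof -
    have "?a gchoose j = (-1) ^ j * ((of_nat j - ?a - 1) gchoose j)" by (rule gbinomial_negated_upper)
    also have "of_nat j - ?a - 1 = of_nat (k + j)" by simp
    finally show ?thesis by (simp add: binomial_gbinomial)
  qed
  have pos: "of_nat ((k + 1) choose i) = ?b gchoose i" for i
    using binomial_gbinomial[of "k + 1" i, where 'a = 'a] by (simp only: of_nat_add of_nat_1)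
  have "(\<Sum>j\<in>{0..n}. of_nat ((k + j) choose j) * (-1) ^ (n - j) * of_nat ((k + 1) choose (n - j)) :: 'a)
      = (\<Sum>j\<in>{0..n}. (-1) ^ n * ((?a gchoose j) * (?b gchoose (n - j))))"
  proof (rule sum.cong[OF refl])
    fix j assume "j \<in> {0..n}"
    then have "(-1::'a) ^ j * (-1) ^ (n - j) = (-1) ^ n" by (simp add: power_add[symmetric])
    then show "of_nat ((k + j) choose j) * (-1) ^ (n - j) * of_nat ((k + 1) choose (n - j)) =
          (-1) ^ n * ((?a gchoose j) * (?b gchoose (n - j)))"
      unfolding neg pos by (simp add: algebra_simps)
  qed
  also have "\<dots> = (-1) ^ n * ((?a + ?b) gchoose n)"
    by (simp add: sum_distrib_left[symmetric] gbinomial_Vandermonde)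
  also have "\<dots> = (if n = 0 then 1 else 0)" by (simp add: gbinomial_0_left)
  finally show ?thesis .
qed

lemma fix_weight_zero_Suc:
  "int (fix_weight k (Suc n) 0)
     = int (k + 1) * int (fix_weight k n 0) + (-1) ^ Suc n * int ((k + 1) choose Suc n)"
proof -
  define B where "B j = int ((k + j) choose j)" for j
  define c where "c i = int (fix_weight k i 0)" for i
  let ?diff = "\<lambda>i. c i - (if i = 0 then 0 else int (k + 1) * c (i - 1))"
  let ?alt = "\<lambda>i. (-1) ^ i * int ((k + 1) choose i)"
  have conv: "(\<Sum>j\<in>{0..i}. B j * c (i - j)) = int (k + 1) ^ i" for i
    using arg_cong[OF sum_choose_mult_fix_weight_zero[of k i], of int]
    unfolding B_def c_def by (simp add: of_nat_sum)
  have alt: "(\<Sum>j\<in>{0..i}. B j * ?alt (i - j)) = (if i = 0 then 1 else 0)" for i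
  proof -
    have "of_int (\<Sum>j\<in>{0..i}. B j * ?alt (i - j)) = (of_int (if i = 0 then 1 else 0) :: rat)"
      using convolution_choose_alternating_choose[of k i, where 'a = rat]
      by (simp add: B_def mult.assoc)
    then show ?thesis by (simp only: of_int_eq_iff)
  qed
  have "?diff (Suc n) = ?alt (Suc n)"
  proof (rule convolution_cancel_left[where B = B and x = ?diff and y = ?alt])
    show "(\<Sum>j\<in>{0..i}. B j * ?diff (i - j)) = (\<Sum>j\<in>{0..i}. B j * ?alt (i - j))" for i
      using convolution_first_difference[OF conv, of i] alt[of i] by simp
  qed (simp add: B_def)
  then show ?thesis by (simp add: c_def)
qed

section \<open>The derangement polynomials\<close>

definition euler_op :: "int \<Rightarrow> int poly \<Rightarrow> int poly" where
  "euler_op c P = [:1, c:] * P + [:0, 1:] * [:1, -1:] * pderiv P"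

lemma euler_op_add: "euler_op c (P + Q) = euler_op c P + euler_op c Q"
  unfolding euler_op_def pderiv_add by (simp add: distrib_left add_ac)

lemma euler_op_sum: "euler_op c (\<Sum>x\<in>A. f x) = (\<Sum>x\<in>A. euler_op c (f x))"
  by (induction A rule: infinite_finite_induct) (simp_all add: euler_op_add euler_op_def[of c 0])

lemma coeff_euler_op:
  "coeff (euler_op c P) i
     = (if i = 0 then coeff P 0 else of_nat (Suc i) * coeff P i + (c + 1 - of_nat i) * coeff P (i - 1))"
  by (cases i; cases "i - 1") (simp_all add: euler_op_def coeff_pderiv algebra_simps)

lemma euler_op_monom:
  "euler_op c (monom a d) = monom (of_nat (Suc d) * a) d + monom ((c - of_nat d) * a) (Suc d)"
  by (rule poly_eqI) (auto simp: coeff_euler_op coeff_monom algebra_simps)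

text \<open>\<open>geom_coeff n k P\<close> is the coefficient of \<open>t^k\<close> in \<open>P(t) / (1 - t)^(n+1)\<close>.\<close>
definition geom_coeff :: "nat \<Rightarrow> nat \<Rightarrow> int poly \<Rightarrow> int" where
  "geom_coeff n k P = (\<Sum>i\<in>{0..k}. coeff P i * int ((k + n - i) choose n))"

lemma geom_coeff_add: "geom_coeff n k (P + Q) = geom_coeff n k P + geom_coeff n k Q"
  unfolding geom_coeff_def by (simp add: sum.distrib algebra_simps)

lemma geom_coeff_diff: "geom_coeff n k (P - Q) = geom_coeff n k P - geom_coeff n k Q"
  unfolding geom_coeff_def by (simp add: sum_subtractf algebra_simps)

lemma geom_coeff_sum: "geom_coeff n k (\<Sum>x\<in>A. f x) = (\<Sum>x\<in>A. geom_coeff n k (f x))"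
  unfolding geom_coeff_def coeff_sum sum_distrib_right by (rule sum.swap)

lemma geom_coeff_monom:
  "geom_coeff n k (monom c d) = (if d \<le> k then c * int ((k + n - d) choose n) else 0)"
  unfolding geom_coeff_def by (simp add: coeff_monom if_distrib[of "\<lambda>x. x * _"] sum.delta cong: if_cong)

lemma geom_coeff_monom_le:
  assumes "d \<le> n"
  shows "geom_coeff n k (monom c d) = c * int ((k + n - d) choose n)"
  using assms by (simp add: geom_coeff_monom binomial_eq_0)

lemma geom_coeff_eq_0_imp_eq_0:
  assumes "\<And>k. geom_coeff n k Q = 0"
  shows "Q = 0"
proof -
  have "coeff Q k = 0" for k
  proof (induction k rule: less_induct)
    case (less k)
    have "geom_coeff n k Q = coeff Q k + (\<Sum>i\<in>{0..<k}. coeff Q i * int ((k + n - i) choose n))"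
      unfolding geom_coeff_def by (simp add: atLeastLessThanSuc_atLeastAtMost[symmetric])
    then show ?case using assms[of k] by (simp add: less.IH)
  qed
  then show ?thesis by (intro poly_eqI) simp
qed

lemma choose_identity_euler_op:
  assumes "i \<le> k"
  shows "int (Suc i) * int ((k + Suc n - i) choose Suc n) + (int n - int i) * int ((k + n - i) choose Suc n)
       = int (k + 1) * int ((k + n - i) choose n)"
proof -
  define a where "a = k - i"
  have k: "k = a + i" and N: "k + n - i = a + n" "k + Suc n - i = Suc (a + n)"
    using assms by (auto simp: a_def)
  have "Suc n * ((a + n) choose Suc n) = a * ((a + n) choose n)"
    using binomial_absorb_comp[of "a + n" n] binomial_absorption[of n "a + n"] by simp
  then have "int (Suc n) * int ((a + n) choose Suc n) = int a * int ((a + n) choose n)"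
    by (metis of_nat_mult)
  then show ?thesis unfolding N k by (simp add: algebra_simps)
qed

lemma geom_coeff_euler_op:
  "geom_coeff (Suc n) k (euler_op (of_nat n) P) = int (k + 1) * geom_coeff n k P"
proof -
  have monom: "geom_coeff (Suc n) k (euler_op (of_nat n) (monom a d)) = int (k + 1) * geom_coeff n k (monom a d)"
    for a d
  proof -
    consider "Suc d \<le> k" | "d = k" | "k < d" by linarith
    then show ?thesis
    proof cases
      case 1
      then show ?thesis
        using arg_cong[OF choose_identity_euler_op[of d k n], of "(*) a"] 1
        by (simp add: euler_op_monom geom_coeff_add geom_coeff_monom algebra_simps)
    qed (simp_all add: euler_op_monom geom_coeff_add geom_coeff_monom)
  qed
  have "geom_coeff (Suc n) k (euler_op (of_nat n) P)
      = (\<Sum>i\<le>degree P. geom_coeff (Suc n) k (euler_op (of_nat n) (monom (coeff P i) i)))"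
    by (subst (1) poly_as_sum_of_monoms[symmetric]) (simp add: euler_op_sum geom_coeff_sum)
  also have "\<dots> = int (k + 1) * geom_coeff n k P"
    by (subst (2) poly_as_sum_of_monoms[symmetric]) (simp add: monom geom_coeff_sum sum_distrib_left)
  finally show ?thesis .
qed

lemma geom_coeff_Dpoly: "geom_coeff n k (Dpoly n) = int (fix_weight k n 0)"
proof -
  have "geom_coeff n k (Dpoly n) = (\<Sum>\<sigma>\<in>derangements n. geom_coeff n k (monom 1 (des n \<sigma>)))"
    unfolding Dpoly_def by (rule geom_coeff_sum)
  also have "\<dots> = (\<Sum>\<sigma>\<in>derangements n. int (worpitzky_weight n k \<sigma>))"
    by (rule sum.cong[OF refl])
       (simp add: geom_coeff_monom_le[OF order_trans[OF des_le diff_le_self]] worpitzky_weight_def)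
  finally show ?thesis by (simp add: fix_weight_def derangements_eq_nfix)
qed

lemma Dpoly_Suc: "Dpoly (Suc n) = smult ((-1) ^ Suc n) (monom 1 n) + euler_op (of_nat n) (Dpoly n)"
proof -
  have "geom_coeff (Suc n) k (Dpoly (Suc n) - (smult ((-1) ^ Suc n) (monom 1 n) + euler_op (of_nat n) (Dpoly n))) = 0"
    for k
  proof -
    have "smult ((-1) ^ Suc n) (monom 1 n) = (monom ((-1) ^ Suc n) n :: int poly)"
      by (simp add: smult_monom)
    moreover have "geom_coeff (Suc n) k (monom ((-1) ^ Suc n) n) = (-1) ^ Suc n * int ((k + 1) choose Suc n)"
      by (subst geom_coeff_monom_le) simp_all
    ultimately show ?thesis
      using fix_weight_zero_Suc[of k n]
      by (simp only: geom_coeff_diff geom_coeff_add geom_coeff_euler_op geom_coeff_Dpoly)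
  qed
  then show ?thesis using geom_coeff_eq_0_imp_eq_0 by (metis eq_iff_diff_eq_0)
qed

lemma coeff_Dpoly_eq_0:
  assumes "1 \<le> n" "n \<le> i"
  shows "coeff (Dpoly n) i = 0"
proof -
  have "des n \<sigma> \<noteq> i" for \<sigma> using des_le[of n \<sigma>] assms by linarith
  then show ?thesis by (simp add: Dpoly_def coeff_sum)
qed

lemma coeff_Dpoly_Suc:
  assumes "i \<noteq> 0"
  shows "coeff (Dpoly (Suc n)) i = (if i = n then (-1) ^ Suc n else 0)
           + of_nat (Suc i) * coeff (Dpoly n) i + (of_nat n + 1 - of_nat i) * coeff (Dpoly n) (i - 1)"
  using assms by (simp add: Dpoly_Suc coeff_euler_op)

lemma coeff_Dpoly_top: "1 \<le> n \<Longrightarrow> coeff (Dpoly n) (n - 1) = (if even n then 1 else 0)"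
proof (induction n rule: nat_induct_at_least)
  case base
  have "derangements 1 = {}"
    unfolding derangements_def using permutes_in_image by fastforce
  then show ?case by (simp add: Dpoly_def)
next
  case (Suc m)
  then show ?case using coeff_Dpoly_Suc[of m m] coeff_Dpoly_eq_0[of m m] by simp
qed

lemma coeff_Dpoly_rec:
  assumes "2 \<le> n" "1 \<le> k" "k \<noteq> n - 1"
  shows "coeff (Dpoly n) k
           = of_nat (k + 1) * coeff (Dpoly (n - 1)) k + of_nat (n - k) * coeff (Dpoly (n - 1)) (k - 1)"
proof -
  obtain m where n: "n = Suc m" and m: "1 \<le> m" using assms by (cases n) auto
  have "(of_nat m + 1 - of_nat k) * coeff (Dpoly m) (k - 1) = of_nat (n - k) * coeff (Dpoly m) (k - 1)"
    using n m coeff_Dpoly_eq_0[of m "k - 1"] by (cases "k \<le> n") (simp_all add: of_nat_diff)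
  then show ?thesis using coeff_Dpoly_Suc[of k m] assms n by simp
qed

theorem lemma4p1:
  fixes n :: nat
  assumes "n \<ge> 3"
  shows "Dpoly n = smult ((-1) ^ n) (monom 1 (n - 1))
            + [:1, of_nat (n - 1):] * Dpoly (n - 1)
            + [:0, 1:] * [:1, -1:] * pderiv (Dpoly (n - 1))
       \<and> coeff (Dpoly n) (n - 1) = (if even n then 1 else 0)
       \<and> (\<forall>k. k \<ge> 1 \<and> k \<noteq> n - 1 \<longrightarrow>
           coeff (Dpoly n) k = of_nat (k + 1) * coeff (Dpoly (n - 1)) k
                               + of_nat (n - k) * coeff (Dpoly (n - 1)) (k - 1))"
proof -
  obtain m where "n = Suc m" using assms by (cases n) auto
  then have rec: "Dpoly n = smult ((-1) ^ n) (monom 1 (n - 1))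
            + [:1, of_nat (n - 1):] * Dpoly (n - 1)
            + [:0, 1:] * [:1, -1:] * pderiv (Dpoly (n - 1))"
    using Dpoly_Suc[of m] by (simp add: euler_op_def add.assoc)
  moreover have "coeff (Dpoly n) (n - 1) = (if even n then 1 else 0)"
    using assms by (intro coeff_Dpoly_top) simp
  moreover have "\<forall>k. k \<ge> 1 \<and> k \<noteq> n - 1 \<longrightarrow>
      coeff (Dpoly n) k = of_nat (k + 1) * coeff (Dpoly (n - 1)) k + of_nat (n - k) * coeff (Dpoly (n - 1)) (k - 1)"
  proof (intro allI impI)
    fix k assume "k \<ge> 1 \<and> k \<noteq> n - 1"
    then show "coeff (Dpoly n) k = of_nat (k + 1) * coeff (Dpoly (n - 1)) k
                 + of_nat (n - k) * coeff (Dpoly (n - 1)) (k - 1)"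
      using assms by (intro coeff_Dpoly_rec) auto
  qed
  ultimately show ?thesis by blast
qed

end
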